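(* Let $\mathbf X$ be a totally bounded metric space and $\gamma>0$ such that $\mathcal H_\epsilon(\mathbf X)\asymp(1/\epsilon)^\gamma$ as $\epsilon\to0$. Let $\beta\in(0,1]$, $c>0$, $B>0$, and let $\mathcal F$ be the set of functions $F:\mathbf X\to\mathbb R$ with $\sup_x|F(x)|\le B$ that are Hölder continuous of order $\beta$ with coefficient $c$. There exists a strategy for Predictor such that for every $F\in\mathcal F$ there is $N_0$ such that for all $N\ge N_0$ and all moves of Reality $$\sum_{n=1}^N(y_n-\mu_n)^2\le\sum_{n=1}^N(y_n-F(x_n))^2+C_{\beta,\gamma}\,c\,\frac{N}{\log^{\beta/\gamma}N},$$ where $C_{\beta,\gamma}$ is a constant depending only on $\beta$, $\gamma$ (and on $\mathbf X$ through the implicit constants in the relation $\asymp$), but not on $c$, $F$ or $N$.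
   Context: Protocol: at each round $n$ Reality announces $x_n\in\mathbf X$, Predictor announces $\mu_n\in\mathbb R$, Reality announces $y_n\in[-1,1]$; a strategy for Predictor maps each history to $\mu_n$. $\mathcal H_\epsilon(A)$ is $\log_2$ of the minimal number of points of $A$ forming an $\epsilon$-net for $A$ (in the relevant metric). $f\asymp g$ means $f=O(g)$ and $g=O(f)$ as $\epsilon\to0$. $F$ is Hölder continuous of order $\beta$ with coefficient $c$ if $|F(x)-F(x')|\le c\,\rho(x,x')^\beta$ for all $x,x'$, $\rho$ the metric of $\mathbf X$. $\log=\log_2$. *)

theory Defs
  imports "HOL-Analysis.Analysis" "HOL-Library.Landau_Symbols"
begin

definition net_number :: "'a::metric_space set \<Rightarrow> real \<Rightarrow> nat" where
  "net_number A \<epsilon> = (LEAST n. \<exists>S. S \<subseteq> A \<and> finite S \<and> card S = n \<and>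
                              (\<forall>x\<in>A. \<exists>s\<in>S. dist x s \<le> \<epsilon>))"

definition metric_entropy :: "'a::metric_space set \<Rightarrow> real \<Rightarrow> real" where
  "metric_entropy A \<epsilon> = log 2 (real (net_number A \<epsilon>))"

definition holder :: "real \<Rightarrow> real \<Rightarrow> ('a::metric_space \<Rightarrow> real) \<Rightarrow> bool" where
  "holder \<beta> c F \<longleftrightarrow> (\<forall>x x'. \<bar>F x - F x'\<bar> \<le> c * dist x x' powr \<beta>)"

text \<open>A Predictor strategy maps the history (previous pairs (x_i,y_i)) and the
  current x_n to the prediction mu_n. Rounds are indexed from 1.\<close>
definition predictions :: "(('a \<times> real) list \<Rightarrow> 'a \<Rightarrow> real) \<Rightarrow> (nat \<Rightarrow> 'a) \<Rightarrow> (nat \<Rightarrow> real) \<Rightarrow> nat \<Rightarrow> real" where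
  "predictions P x y n = P (map (\<lambda>i. (x i, y i)) [1..<n]) (x n)"

end

theory Submission
  imports Defs "HOL-Real_Asymp.Real_Asymp"
begin

text \<open>Time is cut into epochs \<open>[2^j, 2^(j+1))\<close>. In epoch \<open>j\<close> the space is partitioned into
  the cells of a minimal \<open>\<epsilon>\<^sub>j\<close>-net, and Predictor predicts the mean of the earlier outcomes
  in the current cell. On each cell this is follow-the-leader for the square loss, whose regret
  against every constant is \<open>O(log N)\<close>; the constant is taken to be \<open>F\<close> at the centre of
  the cell, clipped to \<open>[-1, 1]\<close>, which loses at most \<open>4 c \<epsilon>\<^sub>j^\<beta>\<close> per round against
  \<open>F\<close> itself. Choosing \<open>\<epsilon>\<^sub>j\<close> with entropy about \<open>j/2\<close> keeps the number of cells
  up to round \<open>N\<close> at \<open>O(sqrt N log N)\<close>, while \<open>\<epsilon>\<^sub>j^\<beta> = O(log N powr (-\<beta>/\<gamma>))\<close>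
  for all rounds after \<open>sqrt N\<close>.\<close>

lemma sum_sq_dev_mean_le:
  fixes y :: "'b \<Rightarrow> real"
  assumes "finite S"
  shows "(\<Sum>i\<in>S. (y i - (\<Sum>k\<in>S. y k) / card S)\<^sup>2) \<le> (\<Sum>i\<in>S. (y i - m)\<^sup>2)"
proof (cases "S = {}")
  case False
  define t where "t = real (card S)"
  define s where "s = (\<Sum>k\<in>S. y k)"
  have "t > 0" using False assms by (simp add: t_def card_gt_0_iff)
  have expand: "(\<Sum>i\<in>S. (y i - a)\<^sup>2) = (\<Sum>i\<in>S. (y i)\<^sup>2) - 2 * a * s + t * a\<^sup>2" for a
    by (simp add: power2_diff sum.distrib sum_subtractf s_def t_def algebra_simps)
      (simp add: sum_distrib_left sum_distrib_right)
  have "(\<Sum>i\<in>S. (y i - m)\<^sup>2) = (\<Sum>i\<in>S. (y i - s / t)\<^sup>2) + t * (s / t - m)\<^sup>2"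
    unfolding expand using \<open>t > 0\<close> by (simp add: field_simps power2_eq_square)
  moreover have "t * (s / t - m)\<^sup>2 \<ge> 0" using \<open>t > 0\<close> by simp
  ultimately show ?thesis unfolding s_def t_def by linarith
qed simp

lemma abs_mean_le_1:
  fixes y :: "'b \<Rightarrow> real"
  assumes "\<And>i. i \<in> S \<Longrightarrow> \<bar>y i\<bar> \<le> 1"
  shows "\<bar>(\<Sum>k\<in>S. y k) / card S\<bar> \<le> 1"
proof (cases "card S = 0")
  case False
  have "\<bar>\<Sum>k\<in>S. y k\<bar> \<le> (\<Sum>k\<in>S. 1)"
    by (rule order_trans[OF sum_abs]) (intro sum_mono assms)
  then show ?thesis using False by (simp add: abs_div)
qed simp

text \<open>With no past round in \<open>I\<close> the quotient is \<open>0 / 0 = 0\<close>.\<close>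
definition past_mean :: "nat set \<Rightarrow> (nat \<Rightarrow> real) \<Rightarrow> nat \<Rightarrow> real" where
  "past_mean I y n = (\<Sum>k\<in>I \<inter> {..<n}. y k) / card (I \<inter> {..<n})"

lemma abs_past_mean_le_1: "(\<And>i. \<bar>y i\<bar> \<le> 1) \<Longrightarrow> \<bar>past_mean I y n\<bar> \<le> 1"
  unfolding past_mean_def by (rule abs_mean_le_1)

lemma past_mean_Suc_notin: "n \<notin> I \<Longrightarrow> past_mean I y (Suc n) = past_mean I y n"
  unfolding past_mean_def by (metis Int_insert_right lessThan_Suc)

lemma past_mean_Suc_in:
  assumes "n \<in> I"
  shows "past_mean I y (Suc n) =
    (card (I \<inter> {..<n}) * past_mean I y n + y n) / (card (I \<inter> {..<n}) + 1)"
proof -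
  have eq: "I \<inter> {..<Suc n} = insert n (I \<inter> {..<n})" using assms by auto
  show ?thesis
    by (cases "card (I \<inter> {..<n}) = 0") (auto simp: past_mean_def eq add.commute)
qed

lemma sq_loss_mean_update_le:
  fixes y M t :: real
  assumes "\<bar>y\<bar> \<le> 1" "\<bar>M\<bar> \<le> 1" "t \<ge> 0"
  shows "(y - M)\<^sup>2 \<le> (y - (t * M + y) / (t + 1))\<^sup>2 + 8 / (t + 1)"
proof -
  define d where "d = (y - M) / (t + 1)"
  have "(t * M + y) / (t + 1) = M + d" using assms(3) by (simp add: d_def field_simps)
  then have "(y - M)\<^sup>2 - (y - (t * M + y) / (t + 1))\<^sup>2 = 2 * d * (y - M) - d\<^sup>2"
    by (simp add: power2_eq_square algebra_simps)
  also have "\<dots> \<le> 2 * d * (y - M)" by simp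
  also have "\<dots> = 2 * (y - M)\<^sup>2 / (t + 1)" by (simp add: d_def power2_eq_square)
  also have "\<dots> \<le> 2 * 2\<^sup>2 / (t + 1)"
  proof -
    have "\<bar>y - M\<bar> \<le> \<bar>2\<bar>" using assms(1,2) by linarith
    then have "(y - M)\<^sup>2 \<le> 2\<^sup>2" by (metis abs_le_square_iff)
    then show ?thesis using assms(3) by (intro divide_right_mono mult_left_mono) auto
  qed
  finally show ?thesis by simp
qed

lemma follow_the_leader_prefix:
  assumes y: "\<And>i. \<bar>y i\<bar> \<le> 1"
  shows "(\<Sum>i\<in>I \<inter> {..<n}. (y i - past_mean I y i)\<^sup>2)
    \<le> (\<Sum>i\<in>I \<inter> {..<n}. (y i - past_mean I y n)\<^sup>2) + 8 * harm (card (I \<inter> {..<n}))"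
proof (induction n)
  case (Suc n)
  show ?case
  proof (cases "n \<in> I")
    case False
    then have "I \<inter> {..<Suc n} = I \<inter> {..<n}" by (auto simp: less_Suc_eq)
    then show ?thesis using Suc.IH False by (simp add: past_mean_Suc_notin)
  next
    case True
    define S where "S = I \<inter> {..<n}"
    define t where "t = real (card S)"
    define M where "M = past_mean I y n"
    define M' where "M' = past_mean I y (Suc n)"
    have S: "finite S" "n \<notin> S" "I \<inter> {..<Suc n} = insert n S" using True by (auto simp: S_def)
    have "M' = (t * M + y n) / (t + 1)"
      using past_mean_Suc_in[OF True] by (simp add: M_def M'_def t_def S_def)
    then have last: "(y n - M)\<^sup>2 \<le> (y n - M')\<^sup>2 + 8 / (t + 1)"
      using sq_loss_mean_update_le[OF y abs_past_mean_le_1[OF y]] by (simp add: M_def t_def)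
    have "(\<Sum>i\<in>S. (y i - M)\<^sup>2) \<le> (\<Sum>i\<in>S. (y i - M')\<^sup>2)"
      unfolding M_def past_mean_def S_def by (rule sum_sq_dev_mean_le) simp
    moreover have "harm (card (insert n S)) = harm (card S) + 1 / (t + 1)"
      using S by (simp add: harm_Suc t_def inverse_eq_divide)
    ultimately show ?thesis
      using Suc.IH last S by (simp add: S_def[symmetric] M_def[symmetric] M'_def[symmetric] algebra_simps)
  qed
qed (simp add: harm_def)

lemma follow_the_leader_regret:
  assumes "finite I" "\<And>i. \<bar>y i\<bar> \<le> 1"
  shows "(\<Sum>i\<in>I. (y i - past_mean I y i)\<^sup>2) \<le> (\<Sum>i\<in>I. (y i - m)\<^sup>2) + 8 * harm (card I)"
proof -
  obtain n where "I \<subseteq> {..<n}" using assms(1) finite_nat_iff_bounded by auto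
  then have I: "I \<inter> {..<n} = I" by auto
  have "(\<Sum>i\<in>I. (y i - past_mean I y n)\<^sup>2) \<le> (\<Sum>i\<in>I. (y i - m)\<^sup>2)"
    using sum_sq_dev_mean_le[OF assms(1)] by (simp add: past_mean_def I)
  then show ?thesis using follow_the_leader_prefix[of y I n, OF assms(2)] by (simp add: I)
qed

text \<open>Rounds count from 1, so round \<open>i\<close> of the history \<open>h\<close> is \<open>h ! (i - 1)\<close>.\<close>
definition cell_mean_strategy :: "(nat \<Rightarrow> 'a \<Rightarrow> 'k) \<Rightarrow> ('a \<times> real) list \<Rightarrow> 'a \<Rightarrow> real" where
  "cell_mean_strategy key h z =
    (let n = Suc (length h); W = {i \<in> {1..<n}. key i (fst (h ! (i - 1))) = key n z}
     in (\<Sum>i\<in>W. snd (h ! (i - 1))) / card W)"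

lemma predictions_cell_mean_strategy:
  assumes "n \<in> {1..N}"
  shows "predictions (cell_mean_strategy key) x y n
    = past_mean {i \<in> {1..N}. key i (x i) = key n (x n)} y n"
proof -
  define h where "h = map (\<lambda>i. (x i, y i)) [1..<n]"
  have len: "Suc (length h) = n" using assms by (simp add: h_def)
  have nth: "h ! (i - 1) = (x i, y i)" if "i \<in> {1..<n}" for i
    using that by (auto simp: h_def nth_map)
  have W: "{i \<in> {1..<n}. key i (fst (h ! (i - 1))) = key n (x n)}
      = {i \<in> {1..N}. key i (x i) = key n (x n)} \<inter> {..<n}"
    using assms nth by auto
  have "predictions (cell_mean_strategy key) x y n = cell_mean_strategy key h (x n)"
    by (simp add: predictions_def h_def)
  also have "\<dots> = (\<Sum>i\<in>{i \<in> {1..N}. key i (x i) = key n (x n)} \<inter> {..<n}. snd (h ! (i - 1)))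
      / card ({i \<in> {1..N}. key i (x i) = key n (x n)} \<inter> {..<n})"
    unfolding cell_mean_strategy_def Let_def len W ..
  also have "(\<Sum>i\<in>{i \<in> {1..N}. key i (x i) = key n (x n)} \<inter> {..<n}. snd (h ! (i - 1)))
      = (\<Sum>i\<in>{i \<in> {1..N}. key i (x i) = key n (x n)} \<inter> {..<n}. y i)"
    using nth by (intro sum.cong) auto
  finally show ?thesis by (simp add: past_mean_def)
qed

lemma cell_mean_strategy_regret:
  assumes "finite T" "\<And>n. n \<in> {1..N} \<Longrightarrow> key n (x n) \<in> T" "\<And>n. \<bar>y n\<bar> \<le> 1"
  shows "(\<Sum>n=1..N. (y n - predictions (cell_mean_strategy key) x y n)\<^sup>2)
    \<le> (\<Sum>n=1..N. (y n - v (key n (x n)))\<^sup>2) + 8 * real (card T) * harm N"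
proof -
  define I where "I q = {n \<in> {1..N}. key n (x n) = q}" for q
  have "(\<lambda>n. key n (x n)) ` {1..N} \<subseteq> T" using assms(2) by auto
  then have group: "(\<Sum>n=1..N. g n) = (\<Sum>q\<in>T. \<Sum>n\<in>I q. g n)" for g :: "nat \<Rightarrow> real"
    using sum.group[OF finite_atLeastAtMost assms(1), where h = g] by (simp add: I_def)
  have cell: "(\<Sum>n\<in>I q. (y n - predictions (cell_mean_strategy key) x y n)\<^sup>2)
      \<le> (\<Sum>n\<in>I q. (y n - v (key n (x n)))\<^sup>2) + 8 * harm N" for q
  proof -
    have "(\<Sum>n\<in>I q. (y n - predictions (cell_mean_strategy key) x y n)\<^sup>2)
        = (\<Sum>n\<in>I q. (y n - past_mean (I q) y n)\<^sup>2)"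
      by (intro sum.cong refl) (auto simp: I_def predictions_cell_mean_strategy)
    also have "\<dots> \<le> (\<Sum>n\<in>I q. (y n - v q)\<^sup>2) + 8 * harm (card (I q))"
      by (rule follow_the_leader_regret) (simp_all add: I_def assms(3))
    also have "harm (card (I q)) \<le> (harm N :: real)"
      using card_mono[of "{1..N}" "I q"] by (intro harm_mono) (force simp: I_def)
    also have "(\<Sum>n\<in>I q. (y n - v q)\<^sup>2) = (\<Sum>n\<in>I q. (y n - v (key n (x n)))\<^sup>2)"
      by (simp add: I_def)
    finally show ?thesis by simp
  qed
  have "(\<Sum>n=1..N. (y n - predictions (cell_mean_strategy key) x y n)\<^sup>2)
      \<le> (\<Sum>q\<in>T. (\<Sum>n\<in>I q. (y n - v (key n (x n)))\<^sup>2) + 8 * harm N)"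
    unfolding group by (intro sum_mono cell)
  also have "\<dots> = (\<Sum>n=1..N. (y n - v (key n (x n)))\<^sup>2) + 8 * real (card T) * harm N"
    unfolding sum.distrib group[symmetric] by simp
  finally show ?thesis .
qed

lemma sq_loss_clip_le:
  fixes y a b :: real
  assumes "\<bar>y\<bar> \<le> 1"
  shows "(y - max (-1) (min 1 b))\<^sup>2 \<le> (y - a)\<^sup>2 + 4 * \<bar>a - b\<bar>"
proof -
  define ca where "ca = max (-1) (min 1 a)"
  define cb where "cb = max (-1) (min 1 b)"
  have "\<bar>y - ca\<bar> \<le> \<bar>y - a\<bar>" using assms by (auto simp: ca_def)
  then have clip_a: "(y - ca)\<^sup>2 \<le> (y - a)\<^sup>2" by (metis abs_le_square_iff)
  have "(y - cb)\<^sup>2 = (y - ca)\<^sup>2 + (ca - cb) * (2 * y - ca - cb)"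
    by (simp add: power2_eq_square algebra_simps)
  also have "(ca - cb) * (2 * y - ca - cb) \<le> \<bar>ca - cb\<bar> * \<bar>2 * y - ca - cb\<bar>"
    by (metis abs_ge_self abs_mult)
  also have "\<dots> \<le> \<bar>a - b\<bar> * 4"
    using assms by (intro mult_mono) (auto simp: ca_def cb_def)
  finally show ?thesis using clip_a unfolding cb_def by linarith
qed

lemma ex_minimal_net:
  assumes "totally_bounded (UNIV :: 'a::metric_space set)" "\<epsilon> > 0"
  shows "\<exists>S::'a set. finite S \<and> card S = net_number (UNIV :: 'a set) \<epsilon>
    \<and> (\<forall>z. \<exists>s\<in>S. dist z s \<le> \<epsilon>)"
proof -
  obtain k :: "'a set" where k: "finite k" "UNIV \<subseteq> (\<Union>s\<in>k. {z. dist s z < \<epsilon>})"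
    using assms unfolding totally_bounded_metric by blast
  have "\<exists>s\<in>k. dist z s \<le> \<epsilon>" for z
  proof -
    obtain s where "s \<in> k" "dist s z < \<epsilon>" using k(2) by blast
    then show ?thesis by (intro bexI[of _ s]) (simp_all add: dist_commute)
  qed
  then have "\<exists>n S. S \<subseteq> (UNIV :: 'a set) \<and> finite S \<and> card S = n
      \<and> (\<forall>z\<in>UNIV. \<exists>s\<in>S. dist z s \<le> \<epsilon>)"
    using k(1) by blast
  from LeastI_ex[OF this] show ?thesis unfolding net_number_def by simp
qed

definition minimal_net :: "real \<Rightarrow> 'a::metric_space set" where
  "minimal_net \<epsilon> = (SOME S. finite S \<and> card S = net_number (UNIV :: 'a set) \<epsilon>
    \<and> (\<forall>z. \<exists>s\<in>S. dist z s \<le> \<epsilon>))"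

definition net_center :: "real \<Rightarrow> 'a::metric_space \<Rightarrow> 'a" where
  "net_center \<epsilon> z = (SOME s. s \<in> minimal_net \<epsilon> \<and> dist z s \<le> \<epsilon>)"

lemma
  assumes "totally_bounded (UNIV :: 'a::metric_space set)" "\<epsilon> > 0"
  shows finite_minimal_net: "finite (minimal_net \<epsilon> :: 'a set)"
    and card_minimal_net: "card (minimal_net \<epsilon> :: 'a set) = net_number (UNIV :: 'a set) \<epsilon>"
    and net_center_in: "net_center \<epsilon> (z :: 'a) \<in> minimal_net \<epsilon>"
    and dist_net_center_le: "dist z (net_center \<epsilon> z) \<le> \<epsilon>"
proof -
  let ?net = "\<lambda>S :: 'a set. finite S \<and> card S = net_number (UNIV :: 'a set) \<epsilon>
    \<and> (\<forall>z. \<exists>s\<in>S. dist z s \<le> \<epsilon>)"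
  have net: "?net (minimal_net \<epsilon>)"
    unfolding minimal_net_def by (rule someI_ex[OF ex_minimal_net[OF assms]])
  then show "finite (minimal_net \<epsilon> :: 'a set)"
    and "card (minimal_net \<epsilon> :: 'a set) = net_number (UNIV :: 'a set) \<epsilon>"
    by auto
  have "\<exists>s. s \<in> minimal_net \<epsilon> \<and> dist z s \<le> \<epsilon>" using net by blast
  then show "net_center \<epsilon> z \<in> minimal_net \<epsilon>" "dist z (net_center \<epsilon> z) \<le> \<epsilon>"
    unfolding net_center_def by (metis (mono_tags, lifting) someI_ex)+
qed

lemma net_number_le_powr:
  assumes "metric_entropy A \<epsilon> \<le> E"
  shows "real (net_number A \<epsilon>) \<le> 2 powr E"
proof (cases "net_number A \<epsilon> = 0")
  case False
  then have "2 powr log 2 (real (net_number A \<epsilon>)) \<le> 2 powr E"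
    using assms unfolding metric_entropy_def by (intro powr_mono) auto
  then show ?thesis using False by simp
qed simp

definition epoch :: "nat \<Rightarrow> nat" where
  "epoch n = nat \<lfloor>log 2 (real n)\<rfloor>"

lemma epoch_le_log: "n \<ge> 1 \<Longrightarrow> real (epoch n) \<le> log 2 (real n)"
  by (simp add: epoch_def)

lemma log_less_Suc_epoch: "n \<ge> 1 \<Longrightarrow> log 2 (real n) < real (epoch n) + 1"
  by (simp add: epoch_def)

lemma epoch_mono: "1 \<le> n \<Longrightarrow> n \<le> N \<Longrightarrow> epoch n \<le> epoch N"
  unfolding epoch_def by (intro nat_mono floor_mono) auto

definition epoch_key :: "(nat \<Rightarrow> real) \<Rightarrow> nat \<Rightarrow> 'a::metric_space \<Rightarrow> nat \<times> 'a" where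
  "epoch_key r n z = (epoch n, net_center (r (epoch n)) z)"

lemma cell_mean_strategy_epoch_key_regret:
  fixes F :: "'a::metric_space \<Rightarrow> real"
  assumes tb: "totally_bounded (UNIV :: 'a set)" and r: "\<And>j. r j > 0"
    and F: "holder \<beta> c F" "\<beta> \<ge> 0" "c \<ge> 0" and y_bound: "\<And>n. \<bar>y n\<bar> \<le> 1"
  shows "(\<Sum>n=1..N. (y n - predictions (cell_mean_strategy (epoch_key r)) x y n)\<^sup>2)
    \<le> (\<Sum>n=1..N. (y n - F (x n))\<^sup>2) + 4 * c * (\<Sum>n=1..N. r (epoch n) powr \<beta>)
      + 8 * (\<Sum>j\<le>epoch N. real (card (minimal_net (r j) :: 'a set))) * harm N"
proof -
  define T where "T = (SIGMA j:{..epoch N}. (minimal_net (r j) :: 'a set))"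
  define G where "G q = max (-1) (min 1 (F (snd q)))" for q :: "nat \<times> 'a"
  have T: "finite T" "card T = (\<Sum>j\<le>epoch N. card (minimal_net (r j) :: 'a set))"
    using finite_minimal_net[OF tb r] by (simp_all add: T_def)
  have keys: "epoch_key r n (x n) \<in> T" if "n \<in> {1..N}" for n
    using that epoch_mono net_center_in[OF tb r] by (auto simp: T_def epoch_key_def)
  have round: "(y n - G (epoch_key r n (x n)))\<^sup>2 \<le> (y n - F (x n))\<^sup>2 + 4 * (c * r (epoch n) powr \<beta>)" for n
  proof -
    let ?s = "net_center (r (epoch n)) (x n)"
    have "\<bar>F (x n) - F ?s\<bar> \<le> c * dist (x n) ?s powr \<beta>" using F(1) by (simp add: holder_def)
    also have "\<dots> \<le> c * r (epoch n) powr \<beta>"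
      using F(2,3) dist_net_center_le[OF tb r] by (intro mult_left_mono powr_mono2) auto
    finally show ?thesis
      using sq_loss_clip_le[where a = "F (x n)" and b = "F ?s", OF y_bound[of n]]
      by (simp add: G_def epoch_key_def)
  qed
  have "(\<Sum>n=1..N. (y n - G (epoch_key r n (x n)))\<^sup>2)
      \<le> (\<Sum>n=1..N. (y n - F (x n))\<^sup>2 + 4 * (c * r (epoch n) powr \<beta>))"
    by (intro sum_mono round)
  also have "\<dots> = (\<Sum>n=1..N. (y n - F (x n))\<^sup>2) + 4 * c * (\<Sum>n=1..N. r (epoch n) powr \<beta>)"
    by (simp add: sum.distrib sum_distrib_left mult.assoc)
  finally show ?thesis
    using cell_mean_strategy_regret[where key = "epoch_key r" and v = G and x = x and y = y and N = N,
        OF T(1) keys y_bound] T(2)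
    by simp
qed

lemma harm_le_ln_plus_1: "n > 0 \<Longrightarrow> harm n \<le> ln (real n) + 1"
  using euler_mascheroni_sequence_decreasing[of 1 n] by (simp add: harm_Suc harm_def)

text \<open>Below \<open>e0\<close> a minimal \<open>\<epsilon>\<close>-net has at most \<open>2 powr (A \<epsilon> powr -\<gamma>)\<close> points. The second
  argument of \<open>min\<close> makes this exponent \<open>(j + 1) / 2\<close>, so the net used in epoch \<open>j\<close> (rounds
  \<open>2^j\<close> to \<open>2^(j+1) - 1\<close>) has about \<open>sqrt (2^j)\<close> points; the cap \<open>e0 / 2\<close> keeps the
  entropy bound applicable.\<close>
definition epoch_radius :: "real \<Rightarrow> real \<Rightarrow> real \<Rightarrow> nat \<Rightarrow> real" where
  "epoch_radius A e0 \<gamma> j = min (e0 / 2) ((2 * A / (real j + 1)) powr (1 / \<gamma>))"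

definition epoch_net_strategy ::
    "real \<Rightarrow> real \<Rightarrow> real \<Rightarrow> ('a::metric_space \<times> real) list \<Rightarrow> 'a \<Rightarrow> real" where
  "epoch_net_strategy A e0 \<gamma> = cell_mean_strategy (epoch_key (epoch_radius A e0 \<gamma>))"

lemma epoch_radius_pos: "A > 0 \<Longrightarrow> e0 > 0 \<Longrightarrow> epoch_radius A e0 \<gamma> j > 0"
  by (simp add: epoch_radius_def)

lemma epoch_radius_powr_le:
  assumes "A > 0" "e0 > 0" "\<gamma> > 0" "\<beta> \<ge> 0"
  shows "epoch_radius A e0 \<gamma> j powr \<beta> \<le> (e0 / 2) powr \<beta>"
    and "epoch_radius A e0 \<gamma> j powr \<beta> \<le> (2 * A / (real j + 1)) powr (\<beta> / \<gamma>)"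
proof -
  show "epoch_radius A e0 \<gamma> j powr \<beta> \<le> (e0 / 2) powr \<beta>"
    using assms epoch_radius_pos by (intro powr_mono2) (auto simp: epoch_radius_def)
  have "epoch_radius A e0 \<gamma> j powr \<beta> \<le> ((2 * A / (real j + 1)) powr (1 / \<gamma>)) powr \<beta>"
    using assms epoch_radius_pos by (intro powr_mono2) (auto simp: epoch_radius_def)
  then show "epoch_radius A e0 \<gamma> j powr \<beta> \<le> (2 * A / (real j + 1)) powr (\<beta> / \<gamma>)"
    by (simp add: powr_powr)
qed

lemma card_less_sqrt_le: "real (card {n \<in> {1..N}. real n < sqrt N}) \<le> sqrt N"
proof -
  have "{n \<in> {1..N}. real n < sqrt N} \<subseteq> {1..nat \<lfloor>sqrt N\<rfloor>}" by (auto simp: le_nat_floor)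
  then have "card {n \<in> {1..N}. real n < sqrt N} \<le> nat \<lfloor>sqrt N\<rfloor>"
    using card_mono[of "{1..nat \<lfloor>sqrt N\<rfloor>}"] by fastforce
  then have "real (card {n \<in> {1..N}. real n < sqrt N}) \<le> real (nat \<lfloor>sqrt N\<rfloor>)"
    by (rule of_nat_mono)
  also have "\<dots> \<le> sqrt N" by (simp add: of_nat_nat)
  finally show ?thesis .
qed

lemma sum_epoch_radius_powr_le:
  assumes pos: "A > 0" "e0 > 0" "\<gamma> > 0" "\<beta> \<ge> 0" and N: "N \<ge> 2"
  shows "(\<Sum>n=1..N. epoch_radius A e0 \<gamma> (epoch n) powr \<beta>)
    \<le> (e0 / 2) powr \<beta> * sqrt N + N * ((4 * A) powr (\<beta> / \<gamma>) / log 2 N powr (\<beta> / \<gamma>))"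
proof -
  define L where "L = log 2 N"
  define D where "D = (4 * A) powr (\<beta> / \<gamma>) / L powr (\<beta> / \<gamma>)"
  have L: "L \<ge> 1" using N by (simp add: L_def)
  have round: "epoch_radius A e0 \<gamma> (epoch n) powr \<beta> \<le> (if real n < sqrt N then (e0 / 2) powr \<beta> else 0) + D"
    if n: "n \<in> {1..N}" for n
  proof (cases "real n < sqrt N")
    case True
    then show ?thesis using epoch_radius_powr_le(1)[OF pos] by (simp add: D_def add_increasing2)
  next
    case False
    have "L / 2 = log 2 (sqrt N)" using N by (simp add: L_def powr_half_sqrt[symmetric] log_powr)
    also have "\<dots> \<le> log 2 n" using False n by (subst log_le_cancel_iff) auto
    also have "\<dots> < real (epoch n) + 1" using n by (intro log_less_Suc_epoch) auto
    finally have "L / 2 < real (epoch n) + 1" .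
    then have "(2 * A / (real (epoch n) + 1)) powr (\<beta> / \<gamma>) \<le> (2 * A / (L / 2)) powr (\<beta> / \<gamma>)"
      using L pos by (intro powr_mono2 divide_left_mono) auto
    also have "\<dots> = D" using L pos by (simp add: D_def powr_divide)
    finally have "epoch_radius A e0 \<gamma> (epoch n) powr \<beta> \<le> D"
      by (rule order_trans[OF epoch_radius_powr_le(2)[OF pos]])
    then show ?thesis using False by simp
  qed
  have "(\<Sum>n=1..N. epoch_radius A e0 \<gamma> (epoch n) powr \<beta>)
      \<le> (\<Sum>n=1..N. (if real n < sqrt N then (e0 / 2) powr \<beta> else 0) + D)"
    by (intro sum_mono round)
  also have "\<dots> = real (card {n \<in> {1..N}. real n < sqrt N}) * (e0 / 2) powr \<beta> + N * D"
    by (simp add: sum.distrib sum.inter_filter[symmetric])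
  also have "\<dots> \<le> (e0 / 2) powr \<beta> * sqrt N + N * D"
    using mult_right_mono[OF card_less_sqrt_le[of N] powr_ge_zero[of "e0 / 2" \<beta>]]
    by (simp add: mult.commute)
  finally show ?thesis by (simp add: D_def L_def)
qed

context
  fixes A e0 \<gamma> :: real
  assumes tb: "totally_bounded (UNIV :: 'a::metric_space set)"
    and pos: "A > 0" "e0 > 0" "\<gamma> > 0"
    and entropy: "\<And>\<epsilon>. 0 < \<epsilon> \<Longrightarrow> \<epsilon> < e0 \<Longrightarrow>
      metric_entropy (UNIV :: 'a set) \<epsilon> \<le> A * (1 / \<epsilon>) powr \<gamma>"
begin

lemma card_minimal_net_epoch_radius_le:
  "real (card (minimal_net (epoch_radius A e0 \<gamma> j) :: 'a set))
    \<le> 2 powr (A * (2 / e0) powr \<gamma>) + 2 powr ((real j + 1) / 2)"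
proof -
  define \<epsilon> where "\<epsilon> = epoch_radius A e0 \<gamma> j"
  have \<epsilon>: "0 < \<epsilon>" "\<epsilon> < e0" using pos by (auto simp: \<epsilon>_def epoch_radius_def)
  have "real (card (minimal_net \<epsilon> :: 'a set)) \<le> 2 powr (A * (1 / \<epsilon>) powr \<gamma>)"
    using card_minimal_net[OF tb \<epsilon>(1)] net_number_le_powr[OF entropy[OF \<epsilon>]] by simp
  also have "\<dots> \<le> 2 powr (A * (2 / e0) powr \<gamma>) + 2 powr ((real j + 1) / 2)"
  proof (cases "\<epsilon> = e0 / 2")
    case True
    then have "1 / \<epsilon> = 2 / e0" using \<epsilon>(1) by (simp add: field_simps)
    then show ?thesis using powr_ge_zero[of 2 "(real j + 1) / 2"] by simp
  next
    case False
    then have "\<epsilon> powr \<gamma> = 2 * A / (real j + 1)"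
      using pos by (simp add: \<epsilon>_def epoch_radius_def min_def powr_powr split: if_splits)
    then have "A * (1 / \<epsilon>) powr \<gamma> = (real j + 1) / 2"
      using \<epsilon>(1) pos by (simp add: powr_divide)
    then have "2 powr (A * (1 / \<epsilon>) powr \<gamma>) = 2 powr ((real j + 1) / 2)" by (simp only:)
    then show ?thesis using powr_ge_zero[of 2 "A * (2 / e0) powr \<gamma>"] by linarith
  qed
  finally show ?thesis by (simp add: \<epsilon>_def)
qed

lemma sum_card_epoch_nets_le:
  assumes N: "N \<ge> 1"
  shows "(\<Sum>j\<le>epoch N. real (card (minimal_net (epoch_radius A e0 \<gamma> j) :: 'a set)))
    \<le> (log 2 N + 1) * (2 powr (A * (2 / e0) powr \<gamma>) + 2 * sqrt N)"
proof -
  define K where "K = 2 powr (A * (2 / e0) powr \<gamma>)"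
  have epoch_N: "real (epoch N) \<le> log 2 N" using epoch_le_log[OF N] .
  have "2 powr (log 2 N + 1) = 2 * N" using N by (simp add: powr_add)
  then have "2 powr ((log 2 N + 1) / 2) = sqrt (2 * N)"
    by (metis powr_powr powr_half_sqrt powr_ge_zero times_divide_eq_right mult_1_right)
  also have "\<dots> \<le> 2 * sqrt N"
    using real_le_lsqrt[of 2 2] by (simp add: real_sqrt_mult mult_right_mono)
  finally have top: "2 powr ((log 2 N + 1) / 2) \<le> 2 * sqrt N" .
  have "(\<Sum>j\<le>epoch N. real (card (minimal_net (epoch_radius A e0 \<gamma> j) :: 'a set)))
      \<le> (\<Sum>j\<le>epoch N. K + 2 * sqrt N)"
  proof (rule sum_mono)
    fix j assume "j \<in> {..epoch N}"
    then have "2 powr ((real j + 1) / 2) \<le> 2 powr ((log 2 N + 1) / 2)"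
      using epoch_N by (intro powr_mono) auto
    then show "real (card (minimal_net (epoch_radius A e0 \<gamma> j) :: 'a set)) \<le> K + 2 * sqrt N"
      using card_minimal_net_epoch_radius_le[of j] top unfolding K_def by linarith
  qed
  also have "\<dots> = (real (epoch N) + 1) * (K + 2 * sqrt N)" by simp
  also have "\<dots> \<le> (log 2 N + 1) * (K + 2 * sqrt N)"
    using epoch_N by (intro mult_right_mono) (auto simp: K_def)
  finally show ?thesis by (simp add: K_def)
qed

lemma epoch_net_strategy_regret_le:
  fixes F :: "'a \<Rightarrow> real"
  assumes F: "holder \<beta> c F" "\<beta> \<ge> 0" "c \<ge> 0" and y_bound: "\<And>n. \<bar>y n\<bar> \<le> 1"
    and N: "N \<ge> 2"
  shows "(\<Sum>n=1..N. (y n - predictions (epoch_net_strategy A e0 \<gamma>) x y n)\<^sup>2)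
    \<le> (\<Sum>n=1..N. (y n - F (x n))\<^sup>2) + 4 * c * (N * ((4 * A) powr (\<beta> / \<gamma>) / log 2 N powr (\<beta> / \<gamma>)))
      + (4 * c * (e0 / 2) powr \<beta> * sqrt N
         + 8 * (log 2 N + 1) * (2 powr (A * (2 / e0) powr \<gamma>) + 2 * sqrt N) * (ln N + 1))"
proof -
  let ?r = "epoch_radius A e0 \<gamma>"
  have "4 * c * (\<Sum>n=1..N. ?r (epoch n) powr \<beta>)
      \<le> 4 * c * ((e0 / 2) powr \<beta> * sqrt N + N * ((4 * A) powr (\<beta> / \<gamma>) / log 2 N powr (\<beta> / \<gamma>)))"
    using sum_epoch_radius_powr_le[OF pos F(2) N] F(3) by (intro mult_left_mono) auto
  moreover have "8 * (\<Sum>j\<le>epoch N. real (card (minimal_net (?r j) :: 'a set))) * harm N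
      \<le> 8 * ((log 2 N + 1) * (2 powr (A * (2 / e0) powr \<gamma>) + 2 * sqrt N)) * (ln N + 1)"
    using sum_card_epoch_nets_le[of N] harm_le_ln_plus_1[of N] N
    by (intro mult_mono mult_left_mono) (auto intro: sum_nonneg harm_nonneg)
  ultimately show ?thesis
    using cell_mean_strategy_epoch_key_regret[where r = ?r and N = N and x = x and y = y,
        OF tb epoch_radius_pos[OF pos(1,2)] F y_bound]
    unfolding epoch_net_strategy_def by (simp add: algebra_simps)
qed

lemma epoch_net_strategy_eventually_regret_le:
  fixes F :: "'a \<Rightarrow> real"
  assumes F: "holder \<beta> c F" "\<beta> > 0" "c > 0"
  shows "\<exists>N0. \<forall>N\<ge>N0. \<forall>x y. (\<forall>n. \<bar>y n\<bar> \<le> 1) \<longrightarrow>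
    (\<Sum>n=1..N. (y n - predictions (epoch_net_strategy A e0 \<gamma>) x y n)\<^sup>2)
      \<le> (\<Sum>n=1..N. (y n - F (x n))\<^sup>2)
        + (4 * (4 * A) powr (\<beta> / \<gamma>) + 2) * c * real N / log 2 (real N) powr (\<beta> / \<gamma>)"
proof -
  define p where "p = \<beta> / \<gamma>"
  define R where "R N = 4 * c * (e0 / 2) powr \<beta> * sqrt N
    + 8 * (log 2 N + 1) * (2 powr (A * (2 / e0) powr \<gamma>) + 2 * sqrt N) * (ln N + 1)" for N :: nat
  have "p > 0" using pos F by (simp add: p_def)
  then have "R \<in> o(\<lambda>N. real N / log 2 (real N) powr p)"
    unfolding R_def by real_asymp
  from landau_o.smallD[OF this, of "2 * c"] F(3)
  have "eventually (\<lambda>N. \<bar>R N\<bar> \<le> 2 * c * (real N / log 2 (real N) powr p)) sequentially"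
    by simp
  then have "eventually (\<lambda>N. R N \<le> 2 * c * (real N / log 2 (real N) powr p) \<and> N \<ge> 2) sequentially"
    using eventually_ge_at_top[of 2] by eventually_elim auto
  then obtain N0 where N0: "\<And>N. N \<ge> N0 \<Longrightarrow> R N \<le> 2 * c * (real N / log 2 (real N) powr p) \<and> N \<ge> 2"
    unfolding eventually_sequentially by blast
  show ?thesis
  proof (intro exI[of _ N0] allI impI)
    fix N x and y :: "nat \<Rightarrow> real"
    assume "N \<ge> N0" and y_bound: "\<forall>n. \<bar>y n\<bar> \<le> 1"
    then have "N \<ge> 2" and R: "R N \<le> 2 * c * (real N / log 2 (real N) powr p)" using N0 by auto
    have "(4 * (4 * A) powr p + 2) * c * real N / log 2 (real N) powr p
        = 4 * c * (N * ((4 * A) powr p / log 2 N powr p)) + 2 * c * (real N / log 2 (real N) powr p)"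
      by (simp add: field_simps) (simp add: add_divide_distrib)
    then show "(\<Sum>n=1..N. (y n - predictions (epoch_net_strategy A e0 \<gamma>) x y n)\<^sup>2)
      \<le> (\<Sum>n=1..N. (y n - F (x n))\<^sup>2)
        + (4 * (4 * A) powr (\<beta> / \<gamma>) + 2) * c * real N / log 2 (real N) powr (\<beta> / \<gamma>)"
      using epoch_net_strategy_regret_le[where N = N and x = x and y = y,
          OF F(1) less_imp_le[OF F(2)] less_imp_le[OF F(3)] _ \<open>N \<ge> 2\<close>] y_bound R
      unfolding R_def p_def by auto
  qed
qed

end

theorem corollary9:
  fixes \<gamma> \<beta> :: real
  assumes "totally_bounded (UNIV :: 'a::metric_space set)"
    and "\<gamma> > 0"
    and "(\<lambda>\<epsilon>. metric_entropy (UNIV :: 'a set) \<epsilon>) \<in> \<Theta>[at_right 0](\<lambda>\<epsilon>. (1 / \<epsilon>) powr \<gamma>)"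
    and "0 < \<beta>" and "\<beta> \<le> 1"
  shows "\<exists>C::real. \<forall>c B :: real. c > 0 \<longrightarrow> B > 0 \<longrightarrow>
    (\<exists>P :: ('a \<times> real) list \<Rightarrow> 'a \<Rightarrow> real.
      \<forall>F :: 'a \<Rightarrow> real. (\<forall>x. \<bar>F x\<bar> \<le> B) \<and> holder \<beta> c F \<longrightarrow>
        (\<exists>N0::nat. \<forall>N\<ge>N0. \<forall>(x :: nat \<Rightarrow> 'a) (y :: nat \<Rightarrow> real).
           (\<forall>n. -1 \<le> y n \<and> y n \<le> 1) \<longrightarrow>
           (\<Sum>n=1..N. (y n - predictions P x y n)\<^sup>2)
             \<le> (\<Sum>n=1..N. (y n - F (x n))\<^sup>2)
                + C * c * real N / (log 2 (real N)) powr (\<beta> / \<gamma>)))"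
proof -
  obtain A where "A > 0" and
    "eventually (\<lambda>\<epsilon>. norm (metric_entropy (UNIV :: 'a set) \<epsilon>) \<le> A * norm ((1 / \<epsilon>) powr \<gamma>)) (at_right 0)"
    using bigthetaD1[OF assms(3)] by (elim landau_o.bigE) auto
  then obtain e0 where "e0 > 0" and
    entropy: "\<And>\<epsilon>. 0 < \<epsilon> \<Longrightarrow> \<epsilon> < e0 \<Longrightarrow> metric_entropy (UNIV :: 'a set) \<epsilon> \<le> A * (1 / \<epsilon>) powr \<gamma>"
    unfolding eventually_at_right_field by (force simp: abs_le_iff)
  show ?thesis
    using epoch_net_strategy_eventually_regret_le[OF assms(1) \<open>A > 0\<close> \<open>e0 > 0\<close> assms(2) entropy _ assms(4)]
    by (intro exI[of _ "4 * (4 * A) powr (\<beta> / \<gamma>) + 2"] allI impI exI[of _ "epoch_net_strategy A e0 \<gamma>"])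
      (simp add: abs_le_iff conj_commute)
qed

end
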